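(* Suppose $V$ is irreducible and $\bar p$ is the maximizer of $p\mapsto\min_{k}\mathrm{SIR}_k(p)/\gamma_k$ over $\mathcal P$. Then there is $\beta>0$ such that for every $n\in\mathcal N_0(\bar p)$ both $\beta\tilde p=A^{(n)}\tilde p$ with $\tilde p=(\bar p,1)\in\mathbb R_{++}^{K+1}$ and $\beta\bar p=B^{(n)}\bar p$ hold.
   Context: Network model: $K\ge 2$ links, $\mathcal K=\{1,\dots,K\}$. Power constraint set $\mathcal P=\{p\in\mathbb R_+^K: Cp\le\hat p\}$, where $C\in\{0,1\}^{N\times K}$ has at least one entry equal to $1$ in each column and $\hat p=(P_1,\dots,P_N)\in\mathbb R_{++}^N$; $\mathcal N=\{1,\dots,N\}$; $c_n\in\{0,1\}^K$ is the $n$-th row of $C$ (as a column vector) and $g_n(p)=c_n^Tp/P_n$. Gain matrix $V\in\mathbb R_+^{K\times K}$ with zero diagonal, noise vector $z\in\mathbb R_{++}^K$, $\mathrm{SIR}_k(p)=p_k/((Vp)_k+z_k)$. SIR targets $\gamma_k>0$, $\Gamma=\mathrm{diag}(\gamma_1,\dots,\gamma_K)$. For $n\in\mathcal N$: $B^{(n)}=\Gamma V+\frac1{P_n}\Gamma z c_n^T\in\mathbb R_+^{K\times K}$ and $A^{(n)}=\begin{pmatrix}\Gamma V&\Gamma z\\ \frac1{P_n}c_n^T\Gamma V&\frac1{P_n}c_n^T\Gamma z\end{pmatrix}\in\mathbb R_+^{(K+1)\times(K+1)}$. For $p\in\mathbb R_+^K$, $\mathcal N_0(p)=\{n\in\mathcal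 N: g_n(p)=\max_{m\in\mathcal N}g_m(p)=1\}$. *)

theory Defs
  imports Main "HOL-Library.Library"
begin

text \<open>Links are indexed by 0..K-1, constraints by 0..N-1. Vectors are nat => real,
 matrices nat => nat => real; only the indexed entries matter.
 The augmented (K+1)-vectors use index K for the extra coordinate.\<close>

definition matvec :: "nat \<Rightarrow> (nat \<Rightarrow> nat \<Rightarrow> real) \<Rightarrow> (nat \<Rightarrow> real) \<Rightarrow> nat \<Rightarrow> real" where
  "matvec K M x = (\<lambda>i. \<Sum>j<K. M i j * x j)"

definition irreducible_mat :: "nat \<Rightarrow> (nat \<Rightarrow> nat \<Rightarrow> real) \<Rightarrow> bool" where
  "irreducible_mat K M \<longleftrightarrow>
     (\<forall>i<K. \<forall>j<K. (i, j) \<in> trancl {(a, b). a < K \<and> b < K \<and> M a b > 0})"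

definition SIR :: "nat \<Rightarrow> (nat \<Rightarrow> nat \<Rightarrow> real) \<Rightarrow> (nat \<Rightarrow> real) \<Rightarrow> (nat \<Rightarrow> real) \<Rightarrow> nat \<Rightarrow> real" where
  "SIR K V z p k = p k / (matvec K V p k + z k)"

definition power_set :: "nat \<Rightarrow> nat \<Rightarrow> (nat \<Rightarrow> nat \<Rightarrow> real) \<Rightarrow> (nat \<Rightarrow> real) \<Rightarrow> (nat \<Rightarrow> real) set" where
  "power_set K N C P = {p. (\<forall>k<K. 0 \<le> p k) \<and> (\<forall>k\<ge>K. p k = 0) \<and>
                          (\<forall>n<N. (\<Sum>k<K. C n k * p k) \<le> P n)}"

definition min_sir :: "nat \<Rightarrow> (nat \<Rightarrow> nat \<Rightarrow> real) \<Rightarrow> (nat \<Rightarrow> real) \<Rightarrow> (nat \<Rightarrow> real) \<Rightarrow> (nat \<Rightarrow> real) \<Rightarrow> real" where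
  "min_sir K V z \<gamma> p = Min ((\<lambda>k. SIR K V z p k / \<gamma> k) ` {..<K})"

definition gfun :: "nat \<Rightarrow> (nat \<Rightarrow> nat \<Rightarrow> real) \<Rightarrow> (nat \<Rightarrow> real) \<Rightarrow> nat \<Rightarrow> (nat \<Rightarrow> real) \<Rightarrow> real" where
  "gfun K C P n p = (\<Sum>k<K. C n k * p k) / P n"

definition N0 :: "nat \<Rightarrow> nat \<Rightarrow> (nat \<Rightarrow> nat \<Rightarrow> real) \<Rightarrow> (nat \<Rightarrow> real) \<Rightarrow> (nat \<Rightarrow> real) \<Rightarrow> nat set" where
  "N0 K N C P p = {n. n < N \<and> gfun K C P n p = Max ((\<lambda>m. gfun K C P m p) ` {..<N})
                        \<and> gfun K C P n p = 1}"

definition Bmat :: "(nat \<Rightarrow> nat \<Rightarrow> real) \<Rightarrow> (nat \<Rightarrow> real) \<Rightarrow> (nat \<Rightarrow> real) \<Rightarrow> (nat \<Rightarrow> nat \<Rightarrow> real) \<Rightarrow> (nat \<Rightarrow> real) \<Rightarrow> nat \<Rightarrow> nat \<Rightarrow> nat \<Rightarrow> real" where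
  "Bmat V z \<gamma> C P n = (\<lambda>i j. \<gamma> i * V i j + (1 / P n) * (\<gamma> i * z i) * C n j)"

definition Amat :: "nat \<Rightarrow> (nat \<Rightarrow> nat \<Rightarrow> real) \<Rightarrow> (nat \<Rightarrow> real) \<Rightarrow> (nat \<Rightarrow> real) \<Rightarrow> (nat \<Rightarrow> nat \<Rightarrow> real) \<Rightarrow> (nat \<Rightarrow> real) \<Rightarrow> nat \<Rightarrow> nat \<Rightarrow> nat \<Rightarrow> real" where
  "Amat K V z \<gamma> C P n = (\<lambda>i j.
     if i < K \<and> j < K then \<gamma> i * V i j
     else if i < K \<and> j = K then \<gamma> i * z i
     else if i = K \<and> j < K then (1 / P n) * (\<Sum>l<K. C n l * (\<gamma> l * V l j))
     else if i = K \<and> j = K then (1 / P n) * (\<Sum>l<K. C n l * (\<gamma> l * z l))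
     else 0)"

definition augment :: "nat \<Rightarrow> (nat \<Rightarrow> real) \<Rightarrow> nat \<Rightarrow> real" where
  "augment K p = (\<lambda>i. if i < K then p i else if i = K then 1 else 0)"

end

theory Submission
  imports Defs
begin

(* Let c = min_k SIR_k(pbar)/gamma_k be the optimal value.  Comparing with
   the uniform power vector shows c > 0.  The heart of the proof is that at a maximiser
   all weighted SIRs are balanced, i.e. equal to c: if the set of "tight" links (those
   attaining c) were a nonempty proper subset, irreducibility of V yields a tight link a
   that is interfered by a non-tight link b; shrinking the powers of all non-tight links
   by a common factor close to 1 keeps them above c, never decreases any SIR, and
   strictly increases the SIR of a, so the tight set shrinks.  Induction on its size
   then contradicts maximality.  Balance means pbar/c = Gamma (V pbar + z), so pbar > 0,
   and for every saturated constraint n in N0(pbar) we have c_n^T pbar = P_n, which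
   turns this fixed-point equation into the eigen-equations for B^(n) and A^(n) with
   the common eigenvalue beta = 1/c. *)

lemma trancl_leaves_set:
  assumes "(x, y) \<in> trancl E" "x \<in> S" "y \<notin> S"
  shows "\<exists>a b. (a, b) \<in> E \<and> a \<in> S \<and> b \<notin> S"
  using assms
proof (induction rule: trancl_induct)
  case (base y)
  then show ?case by blast
next
  case (step y w)
  then show ?case by (cases "y \<in> S") blast+
qed

lemma irreducible_mat_edge_out:
  assumes irr: "irreducible_mat K M" and S: "S \<subseteq> {..<K}" "S \<noteq> {}" "S \<noteq> {..<K}"
  shows "\<exists>a\<in>S. \<exists>b<K. b \<notin> S \<and> M a b > 0"
proof -
  obtain x y where xy: "x \<in> S" "y < K" "y \<notin> S" using S by blast
  then have "(x, y) \<in> trancl {(a, b). a < K \<and> b < K \<and> M a b > 0}"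
    using irr S(1) unfolding irreducible_mat_def by blast
  then show ?thesis using trancl_leaves_set[OF _ xy(1,3)] by blast
qed

lemma power_set_downward_closed:
  assumes p: "p \<in> power_set K N C P" and C_nonneg: "\<forall>n<N. \<forall>k<K. C n k \<ge> 0"
    and q: "\<forall>k<K. 0 \<le> q k \<and> q k \<le> p k" "\<forall>k\<ge>K. q k = 0"
  shows "q \<in> power_set K N C P"
  unfolding power_set_def
proof (intro CollectI conjI allI impI)
  fix n assume n: "n < N"
  have "(\<Sum>k<K. C n k * q k) \<le> (\<Sum>k<K. C n k * p k)"
    using C_nonneg n q(1) by (intro sum_mono mult_left_mono) auto
  also have "\<dots> \<le> P n" using p n unfolding power_set_def by auto
  finally show "(\<Sum>k<K. C n k * q k) \<le> P n" .
qed (use q in auto)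

text \<open>Some uniform strictly positive power vector is feasible; it witnesses that the
  optimal value is positive.\<close>
lemma uniform_power_feasible:
  assumes K: "K > 0" and C_le1: "\<forall>n<N. \<forall>k<K. C n k \<le> 1" and P_pos: "\<forall>n<N. P n > 0"
  shows "\<exists>\<delta>>0. (\<lambda>k. if k < K then \<delta> else 0) \<in> power_set K N C P"
proof -
  define m where "m = Min (insert 1 (P ` {..<N}))"
  have m_pos: "m > 0" using P_pos unfolding m_def by (subst Min_gr_iff) auto
  define \<delta> where "\<delta> = m / real K"
  have \<delta>_pos: "\<delta> > 0" using m_pos K unfolding \<delta>_def by simp
  have "(\<lambda>k. if k < K then \<delta> else 0) \<in> power_set K N C P"
    unfolding power_set_def
  proof (intro CollectI conjI allI impI)
    fix n assume n: "n < N"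
    have "(\<Sum>k<K. C n k * (if k < K then \<delta> else 0)) \<le> (\<Sum>k<K. \<delta>)"
      using C_le1 n \<delta>_pos by (intro sum_mono) (auto intro: mult_left_le_one_le)
    also have "\<dots> = m" using K unfolding \<delta>_def by simp
    also have "\<dots> \<le> P n" using n unfolding m_def by (intro Min_le) auto
    finally show "(\<Sum>k<K. C n k * (if k < K then \<delta> else 0)) \<le> P n" .
  qed (use \<delta>_pos in auto)
  then show ?thesis using \<delta>_pos by blast
qed

lemma uniform_shrink_factor:
  fixes r :: "nat \<Rightarrow> real"
  assumes "finite T" "c > 0" "\<And>k. k \<in> T \<Longrightarrow> c < r k"
  shows "\<exists>\<theta>. 0 < \<theta> \<and> \<theta> < 1 \<and> (\<forall>k\<in>T. c < \<theta> * r k)"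
proof -
  define m where "m = Max (insert 0 ((\<lambda>k. c / r k) ` T))"
  have quot: "0 \<le> c / r k \<and> c / r k < 1" if "k \<in> T" for k
    using assms(2) assms(3)[OF that] by (simp add: divide_less_eq)
  have m: "0 \<le> m" "m < 1" using assms(1) quot unfolding m_def by (auto simp: Max_ge_iff)
  have m_ge: "c / r k \<le> m" if "k \<in> T" for k using assms(1) that unfolding m_def by (intro Max_ge) auto
  show ?thesis
  proof (intro exI conjI ballI)
    fix k assume k: "k \<in> T"
    have "m < (1 + m) / 2" using m by simp
    then have "c / r k < (1 + m) / 2" using m_ge[OF k] by (rule le_less_trans[rotated])
    then show "c < (1 + m) / 2 * r k" using assms(2) assms(3)[OF k] by (simp add: divide_less_eq)
  qed (use m in auto)
qed

locale interference_network =
  fixes K :: nat and V :: "nat \<Rightarrow> nat \<Rightarrow> real" and z \<gamma> :: "nat \<Rightarrow> real"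
  assumes V_nonneg: "\<And>i j. i < K \<Longrightarrow> j < K \<Longrightarrow> V i j \<ge> 0"
    and z_pos: "\<And>k. k < K \<Longrightarrow> z k > 0"
    and \<gamma>_pos: "\<And>k. k < K \<Longrightarrow> \<gamma> k > 0"
begin

definition ratio :: "(nat \<Rightarrow> real) \<Rightarrow> nat \<Rightarrow> real" where
  "ratio p k = SIR K V z p k / \<gamma> k"

definition tight :: "real \<Rightarrow> (nat \<Rightarrow> real) \<Rightarrow> nat set" where
  "tight c p = {k. k < K \<and> ratio p k = c}"

lemma min_sir_le_ratio: "k < K \<Longrightarrow> min_sir K V z \<gamma> p \<le> ratio p k"
  unfolding min_sir_def ratio_def by (rule Min_le) auto

lemma min_sir_attained: "K > 0 \<Longrightarrow> \<exists>k<K. min_sir K V z \<gamma> p = ratio p k"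
proof -
  assume "K > 0"
  then have "min_sir K V z \<gamma> p \<in> (\<lambda>k. SIR K V z p k / \<gamma> k) ` {..<K}"
    unfolding min_sir_def by (intro Min_in) auto
  then show ?thesis unfolding ratio_def by auto
qed

lemma interference_mono:
  assumes "\<forall>j<K. 0 \<le> q j \<and> q j \<le> p j" "k < K"
  shows "matvec K V q k \<le> matvec K V p k"
  unfolding matvec_def using assms V_nonneg by (intro sum_mono mult_left_mono) auto

lemma interference_nonneg:
  assumes "\<forall>j<K. 0 \<le> p j" "k < K"
  shows "matvec K V p k \<ge> 0"
  unfolding matvec_def using assms V_nonneg by (intro sum_nonneg) auto

lemma denominator_pos:
  assumes "\<forall>j<K. 0 \<le> p j" "k < K"
  shows "matvec K V p k + z k > 0"
  using interference_nonneg[OF assms] z_pos[OF assms(2)] by linarith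

lemma ratio_pos_imp_power_pos:
  assumes "\<forall>j<K. 0 \<le> p j" "k < K" "ratio p k > 0"
  shows "p k > 0"
  using assms denominator_pos[OF assms(1,2)] \<gamma>_pos[OF assms(2)]
  unfolding ratio_def SIR_def by (auto simp: zero_less_divide_iff)

lemma ratio_scaled_ge:
  assumes le: "\<forall>j<K. 0 \<le> q j \<and> q j \<le> p j" and k: "k < K"
    and qk: "q k = t * p k" and t: "t \<ge> 0"
  shows "ratio q k \<ge> t * ratio p k"
proof -
  have p0: "\<forall>j<K. 0 \<le> p j" using le by force
  have "t * p k / (matvec K V p k + z k) \<le> t * p k / (matvec K V q k + z k)"
    using le k p0 t denominator_pos interference_mono by (intro divide_left_mono) auto
  then have "t * SIR K V z p k \<le> SIR K V z q k" unfolding SIR_def qk by simp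
  then show ?thesis unfolding ratio_def using \<gamma>_pos[OF k] by (simp add: divide_right_mono)
qed

lemma ratio_strictly_increases:
  assumes le: "\<forall>j<K. 0 \<le> q j \<and> q j \<le> p j" and ab: "a < K" "b < K" "V a b > 0"
    and qb: "q b < p b" and qa: "q a = p a" and pa: "p a > 0"
  shows "ratio q a > ratio p a"
proof -
  have "matvec K V q a < matvec K V p a"
    unfolding matvec_def
  proof (rule sum_strict_mono_ex1)
    show "\<forall>j\<in>{..<K}. V a j * q j \<le> V a j * p j"
      using le ab V_nonneg by (auto intro: mult_left_mono)
    show "\<exists>j\<in>{..<K}. V a j * q j < V a j * p j" using ab qb by (intro bexI[of _ b]) auto
  qed auto
  moreover have "matvec K V q a + z a > 0" using le ab(1) by (intro denominator_pos) auto
  ultimately have "p a / (matvec K V p a + z a) < p a / (matvec K V q a + z a)"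
    using pa by (intro divide_strict_left_mono) auto
  then have "SIR K V z p a < SIR K V z q a" unfolding SIR_def qa .
  then show ?thesis unfolding ratio_def using \<gamma>_pos[OF ab(1)] by (simp add: divide_strict_right_mono)
qed

section \<open>Balancing at the maximiser\<close>

text \<open>Tight-set reduction: if all weighted SIRs are at least c > 0 and the tight set is a
  nonempty proper subset, lowering the non-tight powers uniformly gives a feasible vector
  with all weighted SIRs still at least c and a strictly smaller tight set.\<close>
lemma tight_set_shrinks:
  assumes irr: "irreducible_mat K V" and C_nonneg: "\<forall>n<N. \<forall>k<K. C n k \<ge> 0"
    and c: "c > 0" and p: "p \<in> power_set K N C P" and ge: "\<forall>k<K. ratio p k \<ge> c"
    and S: "tight c p \<noteq> {}" "tight c p \<noteq> {..<K}"
  shows "\<exists>q\<in>power_set K N C P. (\<forall>k<K. ratio q k \<ge> c) \<and> tight c q \<subset> tight c p"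
proof -
  define T where "T = {k. k < K \<and> k \<notin> tight c p}"
  have T_gt: "c < ratio p k" if "k \<in> T" for k
    using that ge unfolding T_def tight_def by force
  obtain \<theta> where \<theta>: "0 < \<theta>" "\<theta> < 1" "\<forall>k\<in>T. c < \<theta> * ratio p k"
    using uniform_shrink_factor[of T c "ratio p"] T_gt c unfolding T_def by auto
  have p0: "\<forall>k<K. 0 \<le> p k" and pK: "\<forall>k\<ge>K. p k = 0" using p unfolding power_set_def by auto
  have p_pos: "p k > 0" if "k < K" for k
    using ratio_pos_imp_power_pos[OF p0 that] ge that c by force
  define q where "q = (\<lambda>k. if k \<in> T then \<theta> * p k else p k)"
  have le: "\<forall>k<K. 0 \<le> q k \<and> q k \<le> p k"
    using p0 \<theta> unfolding q_def by (auto intro: mult_left_le_one_le)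
  have q_in: "q \<in> power_set K N C P"
    using power_set_downward_closed[OF p C_nonneg le] pK unfolding q_def T_def by auto
  have q_T: "c < ratio q k" if "k \<in> T" for k
    using ratio_scaled_ge[OF le, of k \<theta>] \<theta> that unfolding q_def T_def by force
  have q_ge: "ratio p k \<le> ratio q k" if "k < K" "k \<notin> T" for k
    using ratio_scaled_ge[OF le that(1), of 1] that unfolding q_def by simp
  obtain a b where ab: "a \<in> tight c p" "b < K" "b \<notin> tight c p" "V a b > 0"
    using irreducible_mat_edge_out[OF irr _ S] unfolding tight_def by blast
  have a: "a < K" "a \<notin> T" using ab(1) unfolding tight_def T_def by auto
  have b: "b \<in> T" using ab unfolding T_def by auto
  have "q b < p b" using b p_pos[OF ab(2)] \<theta>(2) unfolding q_def by simp
  moreover have "q a = p a" using a(2) unfolding q_def by simp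
  ultimately have "ratio p a < ratio q a"
    using ratio_strictly_increases[OF le a(1) ab(2,4)] p_pos[OF a(1)] by blast
  then have a_not: "a \<notin> tight c q" using ab(1) unfolding tight_def by auto
  have "\<forall>k<K. ratio q k \<ge> c" using q_T q_ge ge T_def by force
  moreover have "tight c q \<subset> tight c p"
    using q_T a_not ab(1) unfolding tight_def T_def by force
  ultimately show ?thesis using q_in by blast
qed

lemma balanced_at_maximiser:
  assumes K: "K > 0" and irr: "irreducible_mat K V" and C_nonneg: "\<forall>n<N. \<forall>k<K. C n k \<ge> 0"
    and c: "c > 0" and opt: "\<forall>q\<in>power_set K N C P. min_sir K V z \<gamma> q \<le> c"
    and p: "p \<in> power_set K N C P" and ge: "\<forall>k<K. ratio p k \<ge> c"
  shows "\<forall>k<K. ratio p k = c"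
  using p ge
proof (induction "card (tight c p)" arbitrary: p rule: less_induct)
  case (less p)
  consider "tight c p = {}" | "tight c p = {..<K}" | "tight c p \<noteq> {}" "tight c p \<noteq> {..<K}"
    by blast
  then show ?case
  proof cases
    case 1
    obtain k where k: "k < K" "min_sir K V z \<gamma> p = ratio p k" using min_sir_attained[OF K] by blast
    have "ratio p k \<noteq> c" using 1 k(1) unfolding tight_def by blast
    moreover have "c \<le> ratio p k" using less.prems(2) k(1) by blast
    ultimately have "c < min_sir K V z \<gamma> p" unfolding k(2) by linarith
    then show ?thesis using opt less.prems(1) by fastforce
  next
    case 2
    then show ?thesis unfolding tight_def by auto
  next
    case 3
    obtain q where q: "q \<in> power_set K N C P" "\<forall>k<K. ratio q k \<ge> c" "tight c q \<subset> tight c p"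
      using tight_set_shrinks[OF irr C_nonneg c less.prems 3] by blast
    have "card (tight c q) < card (tight c p)"
      using q(3) by (intro psubset_card_mono) (simp add: tight_def)
    then have "\<forall>k<K. ratio q k = c" using less.hyps q(1,2) by blast
    then have "tight c q = {..<K}" unfolding tight_def by auto
    moreover have "tight c p \<subseteq> {..<K}" unfolding tight_def by auto
    ultimately show ?thesis using q(3) by blast
  qed
qed

lemma balanced_fixed_point:
  assumes p0: "\<forall>j<K. 0 \<le> p j" and k: "k < K" and bal: "ratio p k = c" and c: "c > 0"
  shows "(1 / c) * p k = \<gamma> k * (matvec K V p k + z k)"
proof -
  define d where "d = \<gamma> k * (matvec K V p k + z k)"
  have d: "d > 0" using denominator_pos[OF p0 k] \<gamma>_pos[OF k] unfolding d_def by simp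
  have "p k / d = c" using bal unfolding ratio_def SIR_def d_def by (simp add: mult.commute)
  then have "p k = c * d" using d by (simp add: divide_eq_eq)
  then show ?thesis using c unfolding d_def by simp
qed

end

section \<open>Eigen-equations\<close>

lemma N0_budget:
  assumes "n \<in> N0 K N C P p" "P n > 0"
  shows "(\<Sum>k<K. C n k * p k) = P n"
  using assms unfolding N0_def gfun_def by simp

text \<open>The fixed-point equation together with a tight budget gives the eigen-equation for
  B^(n): the noise term Gamma z equals Gamma z c_n^T p / P_n.\<close>
lemma Bmat_eigen:
  assumes fixed_point: "\<And>i. i < K \<Longrightarrow> \<beta> * p i = \<gamma> i * (matvec K V p i + z i)"
    and budget: "(\<Sum>k<K. C n k * p k) = P n" and Pn: "P n \<noteq> 0" and i: "i < K"
  shows "\<beta> * p i = matvec K (Bmat V z \<gamma> C P n) p i"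
proof -
  have "matvec K (Bmat V z \<gamma> C P n) p i
      = \<gamma> i * matvec K V p i + (1 / P n) * (\<gamma> i * z i) * (\<Sum>j<K. C n j * p j)"
    unfolding matvec_def Bmat_def by (simp add: algebra_simps sum.distrib sum_distrib_left)
  also have "\<dots> = \<gamma> i * (matvec K V p i + z i)" using budget Pn by (simp add: algebra_simps)
  finally show ?thesis using fixed_point[OF i] by simp
qed

text \<open>Likewise for A^(n) acting on (p, 1): the first K rows are the fixed-point equation,
  and the last row is c_n^T applied to it, divided by P_n.\<close>
lemma Amat_eigen:
  assumes fixed_point: "\<And>i. i < K \<Longrightarrow> \<beta> * p i = \<gamma> i * (matvec K V p i + z i)"
    and budget: "(\<Sum>k<K. C n k * p k) = P n" and Pn: "P n \<noteq> 0" and i: "i \<le> K"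
  shows "\<beta> * augment K p i = matvec (K + 1) (Amat K V z \<gamma> C P n) (augment K p) i"
proof -
  let ?A = "Amat K V z \<gamma> C P n"
  have split: "matvec (K + 1) ?A (augment K p) i = (\<Sum>j<K. ?A i j * p j) + ?A i K"
    unfolding matvec_def by (simp add: augment_def)
  show ?thesis
  proof (cases "i < K")
    case True
    have "(\<Sum>j<K. ?A i j * p j) = \<gamma> i * matvec K V p i"
      unfolding Amat_def matvec_def using True by (simp add: sum_distrib_left algebra_simps)
    moreover have "?A i K = \<gamma> i * z i" unfolding Amat_def using True by simp
    ultimately show ?thesis using split fixed_point[OF True] True by (simp add: augment_def algebra_simps)
  next
    case False
    then have iK: "i = K" using i by auto
    have "(\<Sum>j<K. ?A i j * p j) = (1 / P n) * (\<Sum>j<K. \<Sum>l<K. C n l * (\<gamma> l * V l j) * p j)"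
      unfolding Amat_def using iK by (simp add: sum_distrib_left sum_distrib_right algebra_simps)
    also have "\<dots> = (1 / P n) * (\<Sum>l<K. C n l * (\<gamma> l * matvec K V p l))"
      unfolding matvec_def by (subst sum.swap) (simp add: sum_distrib_left algebra_simps)
    finally have rows: "(\<Sum>j<K. ?A i j * p j) = (1 / P n) * (\<Sum>l<K. C n l * (\<gamma> l * matvec K V p l))" .
    have "matvec (K + 1) ?A (augment K p) i
        = (1 / P n) * (\<Sum>l<K. C n l * (\<gamma> l * (matvec K V p l + z l)))"
      using split rows iK unfolding Amat_def by (simp add: sum.distrib algebra_simps)
    also have "\<dots> = (1 / P n) * (\<Sum>l<K. C n l * (\<beta> * p l))" using fixed_point by simp
    also have "\<dots> = \<beta>" using budget Pn by (simp add: sum_distrib_left[symmetric] algebra_simps)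
    finally show ?thesis using iK by (simp add: augment_def)
  qed
qed

theorem lemma3:
  fixes K N :: nat
    and C V :: "nat \<Rightarrow> nat \<Rightarrow> real"
    and P z \<gamma> pbar :: "nat \<Rightarrow> real"
  assumes K2: "K \<ge> 2"
    and C01: "\<forall>n<N. \<forall>k<K. C n k = 0 \<or> C n k = 1"
    and Ccol: "\<forall>k<K. \<exists>n<N. C n k = 1"
    and Ppos: "\<forall>n<N. P n > 0"
    and Vnonneg: "\<forall>i<K. \<forall>j<K. V i j \<ge> 0"
    and Vdiag: "\<forall>k<K. V k k = 0"
    and zpos: "\<forall>k<K. z k > 0"
    and gpos: "\<forall>k<K. \<gamma> k > 0"
    and Virr: "irreducible_mat K V"
    and pbar_in: "pbar \<in> power_set K N C P"
    and pbar_max: "\<forall>p\<in>power_set K N C P. min_sir K V z \<gamma> p \<le> min_sir K V z \<gamma> pbar"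
  shows "(\<forall>k<K. pbar k > 0) \<and>
    (\<exists>\<beta>>0. \<forall>n\<in>N0 K N C P pbar.
       (\<forall>i\<le>K. \<beta> * augment K pbar i = matvec (K + 1) (Amat K V z \<gamma> C P n) (augment K pbar) i) \<and>
       (\<forall>i<K. \<beta> * pbar i = matvec K (Bmat V z \<gamma> C P n) pbar i))"
proof -
  interpret interference_network K V z \<gamma> using Vnonneg zpos gpos by unfold_locales auto
  have K: "K > 0" using K2 by simp
  have C_nonneg: "\<forall>n<N. \<forall>k<K. C n k \<ge> 0" and C_le1: "\<forall>n<N. \<forall>k<K. C n k \<le> 1" using C01 by force+
  have p0: "\<forall>k<K. 0 \<le> pbar k" using pbar_in unfolding power_set_def by auto
  define c where "c = min_sir K V z \<gamma> pbar"
  have c_pos: "c > 0"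
  proof -
    obtain \<delta> where \<delta>: "\<delta> > 0" "(\<lambda>k. if k < K then \<delta> else 0) \<in> power_set K N C P"
      using uniform_power_feasible[OF K C_le1 Ppos] by blast
    then have "\<forall>k<K. ratio (\<lambda>k. if k < K then \<delta> else 0) k > 0"
      using denominator_pos gpos unfolding ratio_def SIR_def power_set_def by simp
    then show ?thesis using min_sir_attained[OF K] \<delta>(2) pbar_max c_def by (metis order_less_le_trans)
  qed
  have balanced: "\<forall>k<K. ratio pbar k = c"
    using balanced_at_maximiser[OF K Virr C_nonneg c_pos _ pbar_in] pbar_max min_sir_le_ratio c_def by auto
  have fixed_point: "(1 / c) * pbar i = \<gamma> i * (matvec K V pbar i + z i)" if "i < K" for i
    using balanced_fixed_point[OF p0 that] balanced that c_pos by auto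
  have "\<forall>k<K. pbar k > 0"
    using ratio_pos_imp_power_pos[OF p0] balanced c_pos by auto
  moreover have "\<forall>n\<in>N0 K N C P pbar.
       (\<forall>i\<le>K. (1 / c) * augment K pbar i = matvec (K + 1) (Amat K V z \<gamma> C P n) (augment K pbar) i) \<and>
       (\<forall>i<K. (1 / c) * pbar i = matvec K (Bmat V z \<gamma> C P n) pbar i)"
  proof
    fix n assume n: "n \<in> N0 K N C P pbar"
    then have Pn: "P n > 0" using Ppos unfolding N0_def by auto
    show "(\<forall>i\<le>K. (1 / c) * augment K pbar i = matvec (K + 1) (Amat K V z \<gamma> C P n) (augment K pbar) i) \<and>
       (\<forall>i<K. (1 / c) * pbar i = matvec K (Bmat V z \<gamma> C P n) pbar i)"
      using Amat_eigen[where p = pbar and \<beta> = "1 / c" and V = V and z = z and \<gamma> = \<gamma>, OF fixed_point]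
        Bmat_eigen[where p = pbar and \<beta> = "1 / c" and V = V and z = z and \<gamma> = \<gamma>, OF fixed_point]
        N0_budget[OF n Pn] Pn by auto
  qed
  ultimately show ?thesis using c_pos by (metis divide_pos_pos zero_less_one)
qed

end
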